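(* Let $v_j,v_i\in V(D^+)\setminus\{s\}$ be distinct vertices with $d_s(v_j)\le d_s(v_i)$. If $y\in C(v_j)\cap C(v_i)$ and $v_j$ is not an ancestor of $v_i$ in $D^+$, then $g^*(v_j)\neq\infty$ and $\min_{u\prec y} g(v_i,u)\ge g^*(v_j)$.
   Context: $G=(V,E,w)$ is a simple, connected, undirected graph with positive edge lengths, $s,t\in V$, $d(\cdot,\cdot)$ the shortest path distance in $G$, $d_s(v)=d(s,v)$. $D$ is the union of all shortest $st$-paths of $G$, and $D^+$ is the directed acyclic graph obtained from $D$ by orienting every edge toward $t$. $x\prec y$ means $x$ is an ancestor of $y$ in $D^+$ (a directed path of positive length from $x$ to $y$ exists). For $x\neq s$, $v\neq x$ is an $s$-dominator of $x$ if every directed path from $s$ to $x$ in $D^+$ contains $v$, and $I_s(x)$ is the $s$-dominator of $x$ closest to $x$ (every other $s$-dominator of $x$ is an $s$-dominator of $I_s(x)$). Symmetrically, for $x\neq t$, $v\neq x$ is a $t$-dominator of $x$ if every directed path from $x$ to $t$ in $D^+$ contains $v$, and $I_t(x)$ is the $t$-dominator closest to $x$. For $x\neq s$, $C(x)=\{v: I_s(x)\prec v\prec x\}$. For $x\neq s$ and $y\in V(D^+)$, $g(x,y)=d(y,x)$ if $y\in C(x)$ and $x\prec I_t(y)$, and $g(x,y)=\infty$ otherwise; $g^*(x)=\min_y g(x,y)$. A minimum over the empty set is $\infty$. *)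

theory Defs
  imports "HOL-Analysis.Analysis"
begin

definition is_walk :: "('a \<times> 'a) set \<Rightarrow> 'a \<Rightarrow> 'a \<Rightarrow> 'a list \<Rightarrow> bool" where
  "is_walk E u v xs \<longleftrightarrow> xs \<noteq> [] \<and> hd xs = u \<and> last xs = v \<and>
     successively (\<lambda>a b. (a, b) \<in> E) xs"

definition walk_len :: "('a \<Rightarrow> 'a \<Rightarrow> real) \<Rightarrow> 'a list \<Rightarrow> real" where
  "walk_len w xs = sum_list (map (\<lambda>(a, b). w a b) (zip xs (tl xs)))"

definition wgraph :: "'a set \<Rightarrow> ('a \<times> 'a) set \<Rightarrow> ('a \<Rightarrow> 'a \<Rightarrow> real) \<Rightarrow> bool" where
  "wgraph V E w \<longleftrightarrow> finite V \<and> E \<subseteq> V \<times> V \<and> sym E \<and> irrefl E \<and>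
     (\<forall>u v. (u, v) \<in> E \<longrightarrow> w u v > 0 \<and> w u v = w v u) \<and>
     (\<forall>u\<in>V. \<forall>v\<in>V. \<exists>xs. is_walk E u v xs)"

definition dist_G :: "('a \<times> 'a) set \<Rightarrow> ('a \<Rightarrow> 'a \<Rightarrow> real) \<Rightarrow> 'a \<Rightarrow> 'a \<Rightarrow> real" where
  "dist_G E w u v = Inf {walk_len w xs | xs. is_walk E u v xs}"

definition shortest_st :: "('a \<times> 'a) set \<Rightarrow> ('a \<Rightarrow> 'a \<Rightarrow> real) \<Rightarrow> 'a \<Rightarrow> 'a \<Rightarrow> 'a list \<Rightarrow> bool" where
  "shortest_st E w s t xs \<longleftrightarrow> is_walk E s t xs \<and> walk_len w xs = dist_G E w s t"

definition arcD :: "('a \<times> 'a) set \<Rightarrow> ('a \<Rightarrow> 'a \<Rightarrow> real) \<Rightarrow> 'a \<Rightarrow> 'a \<Rightarrow> ('a \<times> 'a) set" where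
  "arcD E w s t = {(u, v). \<exists>xs as bs. shortest_st E w s t xs \<and> xs = as @ [u, v] @ bs}"

definition VD :: "('a \<times> 'a) set \<Rightarrow> ('a \<Rightarrow> 'a \<Rightarrow> real) \<Rightarrow> 'a \<Rightarrow> 'a \<Rightarrow> 'a set" where
  "VD E w s t = {v. \<exists>xs. shortest_st E w s t xs \<and> v \<in> set xs}"

text \<open>x \<prec> y: directed path of positive length from x to y in D+.\<close>
definition anc :: "('a \<times> 'a) set \<Rightarrow> ('a \<Rightarrow> 'a \<Rightarrow> real) \<Rightarrow> 'a \<Rightarrow> 'a \<Rightarrow> 'a \<Rightarrow> 'a \<Rightarrow> bool" where
  "anc E w s t x y \<longleftrightarrow> (x, y) \<in> (arcD E w s t)\<^sup>+"

definition dpath :: "('a \<times> 'a) set \<Rightarrow> ('a \<Rightarrow> 'a \<Rightarrow> real) \<Rightarrow> 'a \<Rightarrow> 'a \<Rightarrow> 'a \<Rightarrow> 'a \<Rightarrow> 'a list \<Rightarrow> bool" where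
  "dpath E w s t a b p \<longleftrightarrow> p \<noteq> [] \<and> hd p = a \<and> last p = b \<and>
     successively (\<lambda>x y. (x, y) \<in> arcD E w s t) p"

definition sdom :: "('a \<times> 'a) set \<Rightarrow> ('a \<Rightarrow> 'a \<Rightarrow> real) \<Rightarrow> 'a \<Rightarrow> 'a \<Rightarrow> 'a \<Rightarrow> 'a \<Rightarrow> bool" where
  "sdom E w s t v x \<longleftrightarrow> x \<in> VD E w s t \<and> x \<noteq> s \<and> v \<noteq> x \<and>
     (\<forall>p. dpath E w s t s x p \<longrightarrow> v \<in> set p)"

definition tdom :: "('a \<times> 'a) set \<Rightarrow> ('a \<Rightarrow> 'a \<Rightarrow> real) \<Rightarrow> 'a \<Rightarrow> 'a \<Rightarrow> 'a \<Rightarrow> 'a \<Rightarrow> bool" where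
  "tdom E w s t v x \<longleftrightarrow> x \<in> VD E w s t \<and> x \<noteq> t \<and> v \<noteq> x \<and>
     (\<forall>p. dpath E w s t x t p \<longrightarrow> v \<in> set p)"

definition Is :: "('a \<times> 'a) set \<Rightarrow> ('a \<Rightarrow> 'a \<Rightarrow> real) \<Rightarrow> 'a \<Rightarrow> 'a \<Rightarrow> 'a \<Rightarrow> 'a" where
  "Is E w s t x = (THE v. sdom E w s t v x \<and>
     (\<forall>u. sdom E w s t u x \<and> u \<noteq> v \<longrightarrow> sdom E w s t u v))"

definition It :: "('a \<times> 'a) set \<Rightarrow> ('a \<Rightarrow> 'a \<Rightarrow> real) \<Rightarrow> 'a \<Rightarrow> 'a \<Rightarrow> 'a \<Rightarrow> 'a" where
  "It E w s t x = (THE v. tdom E w s t v x \<and>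
     (\<forall>u. tdom E w s t u x \<and> u \<noteq> v \<longrightarrow> tdom E w s t u v))"

definition Cset :: "('a \<times> 'a) set \<Rightarrow> ('a \<Rightarrow> 'a \<Rightarrow> real) \<Rightarrow> 'a \<Rightarrow> 'a \<Rightarrow> 'a \<Rightarrow> 'a set" where
  "Cset E w s t x = {v. anc E w s t (Is E w s t x) v \<and> anc E w s t v x}"

definition gfun :: "('a \<times> 'a) set \<Rightarrow> ('a \<Rightarrow> 'a \<Rightarrow> real) \<Rightarrow> 'a \<Rightarrow> 'a \<Rightarrow> 'a \<Rightarrow> 'a \<Rightarrow> ereal" where
  "gfun E w s t x y = (if y \<in> Cset E w s t x \<and> anc E w s t x (It E w s t y)
     then ereal (dist_G E w y x) else \<infinity>)"

definition gstar :: "('a \<times> 'a) set \<Rightarrow> ('a \<Rightarrow> 'a \<Rightarrow> real) \<Rightarrow> 'a \<Rightarrow> 'a \<Rightarrow> 'a \<Rightarrow> ereal" where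
  "gstar E w s t x = (INF y \<in> VD E w s t. gfun E w s t x y)"

end

theory Submission
  imports Defs
begin

text \<open>Every arc of \<open>D\<^sup>+\<close> strictly increases \<open>d\<^sub>s\<close> and is a shortest path segment, so along
\<open>x \<prec> y\<close> we have \<open>d(x, y) \<le> d\<^sub>s(y) - d\<^sub>s(x)\<close>. Starting from \<open>y\<close>, move to a lowest common
ancestor \<open>x\<close> of the incomparable vertices \<open>v\<^sub>j\<close> and \<open>v\<^sub>i\<close>. The immediate \<open>t\<close>-dominator of \<open>x\<close>
lies on every path from \<open>x\<close> through \<open>v\<^sub>j\<close> and through \<open>v\<^sub>i\<close> to \<open>t\<close>; by lowestness it cannot
precede both, and by incomparability it cannot be one of them, so it lies beyond \<open>v\<^sub>j\<close>.
Hence \<open>x \<in> C(v\<^sub>j)\<close> and \<open>g\<^sup>*(v\<^sub>j) \<le> d(x, v\<^sub>j) \<le> d\<^sub>s(v\<^sub>j) - d\<^sub>s(y)\<close>, while for \<open>u \<prec> y\<close> the triangle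
inequality gives \<open>g(v\<^sub>i, u) \<ge> d(u, v\<^sub>i) \<ge> d\<^sub>s(v\<^sub>i) - d\<^sub>s(y) \<ge> d\<^sub>s(v\<^sub>j) - d\<^sub>s(y)\<close>.\<close>

lemma walk_len_simps [simp]:
  "walk_len w [] = 0" "walk_len w [x] = 0"
  "walk_len w (a # b # xs) = w a b + walk_len w (b # xs)"
  by (auto simp: walk_len_def)

lemma walk_len_append_Cons:
  "walk_len w (xs @ y # ys) = walk_len w (xs @ [y]) + walk_len w (y # ys)"
  by (induction xs rule: induct_list012) auto

lemma successively_set_subset:
  "successively (\<lambda>a b. (a, b) \<in> R) (x # xs) \<Longrightarrow> R \<subseteq> V \<times> V \<Longrightarrow> x \<in> V \<Longrightarrow> set (x # xs) \<subseteq> V"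
  by (induction xs arbitrary: x) auto

lemma successively_hd_rtrancl:
  "successively (\<lambda>x y. (x, y) \<in> R) xs \<Longrightarrow> v \<in> set xs \<Longrightarrow> (hd xs, v) \<in> R\<^sup>*"
proof (induction xs)
  case (Cons x xs)
  show ?case
  proof (cases "v = x")
    case False
    then have "xs \<noteq> []" "v \<in> set xs" using Cons.prems by auto
    then have "(hd xs, v) \<in> R\<^sup>*" "(x, hd xs) \<in> R" using Cons by (auto simp: successively_Cons)
    then show ?thesis by auto
  qed simp
qed simp

lemma successively_rtrancl_last:
  "successively (\<lambda>x y. (x, y) \<in> R) xs \<Longrightarrow> v \<in> set xs \<Longrightarrow> (v, last xs) \<in> R\<^sup>*"
proof (induction xs)
  case (Cons x xs)
  show ?case
  proof (cases "xs = []")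
    case False
    then have xs: "successively (\<lambda>x y. (x, y) \<in> R) xs" "(x, hd xs) \<in> R"
      using Cons.prems by (auto simp: successively_Cons)
    have "(x, last xs) \<in> R\<^sup>*"
      using successively_hd_rtrancl[OF xs(1)] xs(2) False by (simp add: converse_rtrancl_into_rtrancl)
    then show ?thesis using Cons xs False by auto
  qed (use Cons.prems in simp)
qed simp

definition lowest_common_ancestor :: "('a \<times> 'a) set \<Rightarrow> 'a \<Rightarrow> 'a \<Rightarrow> 'a \<Rightarrow> bool" where
  "lowest_common_ancestor R a b x \<longleftrightarrow> (x, a) \<in> R\<^sup>+ \<and> (x, b) \<in> R\<^sup>+ \<and>
     (\<nexists>c. (x, c) \<in> R\<^sup>+ \<and> (c, a) \<in> R\<^sup>+ \<and> (c, b) \<in> R\<^sup>+)"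

lemma exists_lowest_common_ancestor:
  assumes "finite R" "acyclic R" "(y, a) \<in> R\<^sup>+" "(y, b) \<in> R\<^sup>+"
  obtains x where "(y, x) \<in> R\<^sup>*" "lowest_common_ancestor R a b x"
proof -
  let ?S = "{x. (y, x) \<in> R\<^sup>* \<and> (x, a) \<in> R\<^sup>+ \<and> (x, b) \<in> R\<^sup>+}"
  have "wf ((R\<inverse>)\<^sup>+)"
    using finite_acyclic_wf_converse[OF assms(1,2)] by (rule wf_trancl)
  moreover have "y \<in> ?S" using assms(3,4) by simp
  ultimately obtain x where x: "x \<in> ?S" and minimal: "\<And>c. (c, x) \<in> (R\<inverse>)\<^sup>+ \<Longrightarrow> c \<notin> ?S"
    using wfE_min[of "(R\<inverse>)\<^sup>+" y ?S] by blast
  have "(y, c) \<in> R\<^sup>*" if "(x, c) \<in> R\<^sup>+" for c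
    using x that by auto
  then have "lowest_common_ancestor R a b x"
    using x minimal by (auto simp: lowest_common_ancestor_def trancl_converse)
  with x show ?thesis using that by blast
qed

locale wgraph_st =
  fixes V E w s t
  assumes wgraph: "wgraph V E w" and s_in_V: "s \<in> V" and t_in_V: "t \<in> V"
begin

abbreviation "ds v \<equiv> dist_G E w s v"
abbreviation "arcs \<equiv> arcD E w s t"

lemma edges_subset: "E \<subseteq> V \<times> V"
  using wgraph by (auto simp: wgraph_def)

lemma weight_pos: "(u, v) \<in> E \<Longrightarrow> w u v > 0"
  using wgraph by (auto simp: wgraph_def)

lemma walk_vertices: "is_walk E u v xs \<Longrightarrow> u \<in> V \<Longrightarrow> set xs \<subseteq> V"
  unfolding is_walk_def using successively_set_subset[OF _ edges_subset] by (cases xs) auto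

lemma walk_len_nonneg: "successively (\<lambda>a b. (a, b) \<in> E) xs \<Longrightarrow> walk_len w xs \<ge> 0"
proof (induction xs rule: induct_list012)
  case (3 x y zs)
  then show ?case using weight_pos[of x y] by auto
qed auto

lemma dist_G_le_walk_len: "is_walk E u v xs \<Longrightarrow> dist_G E w u v \<le> walk_len w xs"
  unfolding dist_G_def
proof (rule cInf_lower)
  show "bdd_below {walk_len w xs |xs. is_walk E u v xs}"
    by (rule bdd_belowI[of _ 0]) (auto simp: is_walk_def walk_len_nonneg)
qed blast

lemma dist_G_greatest:
  "u \<in> V \<Longrightarrow> v \<in> V \<Longrightarrow> (\<And>xs. is_walk E u v xs \<Longrightarrow> c \<le> walk_len w xs) \<Longrightarrow> c \<le> dist_G E w u v"
  unfolding dist_G_def using wgraph by (intro cInf_greatest) (auto simp: wgraph_def)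

lemma walk_append:
  assumes "is_walk E u m xs" "is_walk E m v ys"
  shows "is_walk E u v (xs @ tl ys) \<and> walk_len w (xs @ tl ys) = walk_len w xs + walk_len w ys"
proof -
  obtain xs' where xs: "xs = xs' @ [m]"
    using assms(1) unfolding is_walk_def by (metis append_butlast_last_id)
  obtain ys' where ys: "ys = m # ys'"
    using assms(2) unfolding is_walk_def by (metis list.collapse)
  have "is_walk E u v (xs' @ m # ys')"
    using assms unfolding is_walk_def xs ys
    by (auto simp: successively_append_iff successively_Cons hd_append split: if_splits)
  then show ?thesis using walk_len_append_Cons[of w xs' m ys'] xs ys by simp
qed

lemma dist_G_triangle:
  assumes "u \<in> V" "m \<in> V" "v \<in> V"
  shows "dist_G E w u v \<le> dist_G E w u m + dist_G E w m v"
proof -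
  have "dist_G E w u v - walk_len w ys \<le> dist_G E w u m" if "is_walk E m v ys" for ys
  proof (rule dist_G_greatest[OF assms(1,2)])
    fix xs assume "is_walk E u m xs"
    then show "dist_G E w u v - walk_len w ys \<le> walk_len w xs"
      using walk_append[OF _ that] dist_G_le_walk_len[of u v] by force
  qed
  then have "dist_G E w u v - dist_G E w u m \<le> dist_G E w m v"
    by (intro dist_G_greatest[OF assms(2,3)]) force
  then show ?thesis by simp
qed

lemma VD_subset: "VD E w s t \<subseteq> V"
  unfolding VD_def shortest_st_def using walk_vertices s_in_V by blast

lemma arc_dist:
  assumes "(a, b) \<in> arcs"
  shows "a \<in> VD E w s t \<and> b \<in> VD E w s t \<and> ds b = ds a + dist_G E w a b \<and> dist_G E w a b > 0"
proof -
  obtain xs as bs where sh: "shortest_st E w s t xs" and xs: "xs = as @ [a, b] @ bs"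
    using assms unfolding arcD_def by blast
  have walk: "is_walk E s t xs" and len: "walk_len w xs = ds t"
    using sh by (auto simp: shortest_st_def)
  have in_VD: "a \<in> VD E w s t" "b \<in> VD E w s t"
    using sh xs unfolding VD_def by auto
  then have "a \<in> V" "b \<in> V" using VD_subset by auto
  have ab: "(a, b) \<in> E"
    using walk xs by (auto simp: is_walk_def successively_append_iff)
  have "ds a \<le> walk_len w (as @ [a])"
    using walk xs by (intro dist_G_le_walk_len)
      (auto simp: is_walk_def successively_append_iff hd_append split: if_splits)
  moreover have "dist_G E w b t \<le> walk_len w (b # bs)"
    using walk xs by (intro dist_G_le_walk_len) (auto simp: is_walk_def successively_append_iff)
  moreover have "walk_len w xs = walk_len w (as @ [a]) + w a b + walk_len w (b # bs)"
    using walk_len_append_Cons[of w as a "b # bs"] xs by simp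
  moreover have "dist_G E w a b \<le> w a b"
    using dist_G_le_walk_len[of a b "[a, b]"] ab by (simp add: is_walk_def)
  moreover have "ds t \<le> ds b + dist_G E w b t" "ds b \<le> ds a + dist_G E w a b"
    using dist_G_triangle \<open>a \<in> V\<close> \<open>b \<in> V\<close> s_in_V t_in_V by blast+
  moreover have "w a b > 0" using weight_pos ab .
  ultimately show ?thesis using len in_VD by linarith
qed

lemma trancl_arc_dist:
  assumes "(a, b) \<in> arcs\<^sup>+"
  shows "a \<in> VD E w s t \<and> b \<in> VD E w s t \<and> ds a < ds b \<and> dist_G E w a b \<le> ds b - ds a"
  using assms
proof (induction rule: trancl_induct)
  case (base b)
  then show ?case using arc_dist[of a b] by auto
next
  case (step b c)
  then have "a \<in> V" "b \<in> V" "c \<in> V" using arc_dist[of b c] VD_subset by auto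
  then have "dist_G E w a c \<le> dist_G E w a b + dist_G E w b c" by (rule dist_G_triangle)
  then show ?case using step arc_dist[of b c] by auto
qed

lemma acyclic_arcs: "acyclic arcs"
  unfolding acyclic_def using trancl_arc_dist by blast

lemma finite_arcs: "finite arcs"
proof (rule finite_subset)
  show "arcs \<subseteq> V \<times> V" using VD_subset by (auto dest: arc_dist)
  show "finite (V \<times> V)" using wgraph by (simp add: wgraph_def)
qed

lemma trancl_arc_dpath: "(a, b) \<in> arcs\<^sup>+ \<Longrightarrow> \<exists>p. dpath E w s t a b p"
proof (induction rule: trancl_induct)
  case (base b)
  then show ?case by (intro exI[of _ "[a, b]"]) (auto simp: dpath_def)
next
  case (step b c)
  then obtain p where "dpath E w s t a b p" by blast
  then have "dpath E w s t a c (p @ [c])"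
    using step by (auto simp: dpath_def successively_append_iff hd_append)
  then show ?case by blast
qed

lemma dpath_mem_rtrancl:
  "dpath E w s t a b p \<Longrightarrow> v \<in> set p \<Longrightarrow> (a, v) \<in> arcs\<^sup>* \<and> (v, b) \<in> arcs\<^sup>*"
  unfolding dpath_def using successively_hd_rtrancl successively_rtrancl_last by fastforce

lemma dpath_append:
  assumes "dpath E w s t a b p" "dpath E w s t b c q"
  shows "dpath E w s t a c (p @ tl q) \<and> set (p @ tl q) \<subseteq> set p \<union> set q"
proof -
  obtain p' where p: "p = p' @ [b]"
    using assms(1) unfolding dpath_def by (metis append_butlast_last_id)
  obtain q' where q: "q = b # q'"
    using assms(2) unfolding dpath_def by (metis list.collapse)
  have "dpath E w s t a c (p' @ b # q')"
    using assms unfolding dpath_def p q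
    by (auto simp: successively_append_iff successively_Cons hd_append split: if_splits)
  then show ?thesis using p q by auto
qed

lemma shortest_st_successively_arcs:
  assumes "shortest_st E w s t xs"
  shows "successively (\<lambda>x y. (x, y) \<in> arcs) xs"
  unfolding successively_conv_nth
proof (intro allI impI)
  fix i assume i: "Suc i < length xs"
  then have "xs = take i xs @ [xs ! i, xs ! Suc i] @ drop (Suc (Suc i)) xs"
    by (simp add: Cons_nth_drop_Suc id_take_nth_drop)
  then show "(xs ! i, xs ! Suc i) \<in> arcs" using assms unfolding arcD_def by blast
qed

lemma VD_dpath_to_t: "v \<in> VD E w s t \<Longrightarrow> \<exists>p. dpath E w s t v t p"
proof -
  assume "v \<in> VD E w s t"
  then obtain xs where sh: "shortest_st E w s t xs" and "v \<in> set xs"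
    unfolding VD_def by blast
  then obtain as bs where xs: "xs = as @ v # bs" by (meson split_list)
  have "dpath E w s t v t (v # bs)"
    using shortest_st_successively_arcs[OF sh] sh xs
    by (auto simp: dpath_def shortest_st_def is_walk_def successively_append_iff)
  then show ?thesis by blast
qed

lemma t_not_trancl: "(t, v) \<notin> arcs\<^sup>+"
proof
  assume tv: "(t, v) \<in> arcs\<^sup>+"
  then obtain p where "dpath E w s t v t p"
    using trancl_arc_dist VD_dpath_to_t by blast
  then have "(v, t) \<in> arcs\<^sup>*" using dpath_mem_rtrancl unfolding dpath_def by force
  with tv have "(t, t) \<in> arcs\<^sup>+" by (rule trancl_rtrancl_trancl)
  then show False using acyclic_arcs by (simp add: acyclic_def)
qed

lemma tdom_trancl: "tdom E w s t v x \<Longrightarrow> (x, v) \<in> arcs\<^sup>+"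
  unfolding tdom_def using VD_dpath_to_t dpath_mem_rtrancl rtrancl_eq_or_trancl by metis

text \<open>A \<open>t\<close>-dominator of \<open>x\<close> lies on the path from \<open>x\<close> through any descendant \<open>a\<close> to \<open>t\<close>.\<close>

lemma tdom_comparable_descendant:
  assumes "tdom E w s t z x" "(x, a) \<in> arcs\<^sup>+"
  shows "(z, a) \<in> arcs\<^sup>* \<or> (a, z) \<in> arcs\<^sup>*"
proof -
  obtain q where q: "dpath E w s t x a q" using trancl_arc_dpath assms(2) by blast
  obtain p where p: "dpath E w s t a t p" using trancl_arc_dist VD_dpath_to_t assms(2) by blast
  have "z \<in> set q \<union> set p" using dpath_append[OF q p] assms(1) unfolding tdom_def by blast
  then show ?thesis using dpath_mem_rtrancl q p by blast
qed

lemma tdom_closest: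
  assumes v: "tdom E w s t v x" and minimal: "\<And>u. tdom E w s t u x \<Longrightarrow> ds v \<le> ds u"
    and u: "tdom E w s t u x" "u \<noteq> v"
  shows "tdom E w s t u v"
proof -
  have not_before_v: "(u, v) \<notin> arcs\<^sup>*"
    using u trancl_arc_dist minimal[OF u(1)] by (force simp: rtrancl_eq_or_trancl)
  have "(x, v) \<in> arcs\<^sup>+" using tdom_trancl v .
  then obtain q where q: "dpath E w s t x v q" using trancl_arc_dpath by blast
  have "v \<noteq> t"
  proof
    assume "v = t"
    obtain p where "dpath E w s t x t p" using VD_dpath_to_t v unfolding tdom_def by blast
    then have "(u, t) \<in> arcs\<^sup>*" using u dpath_mem_rtrancl unfolding tdom_def by blast
    with \<open>v = t\<close> not_before_v show False by simp
  qed
  moreover have "u \<in> set p" if p: "dpath E w s t v t p" for p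
  proof -
    have "u \<in> set q \<union> set p" using dpath_append[OF q p] u unfolding tdom_def by blast
    moreover have "u \<notin> set q" using dpath_mem_rtrancl q not_before_v by blast
    ultimately show ?thesis by blast
  qed
  moreover have "v \<in> VD E w s t" using trancl_arc_dist \<open>(x, v) \<in> arcs\<^sup>+\<close> by blast
  ultimately show ?thesis using u unfolding tdom_def by blast
qed

lemma It_tdom:
  assumes "x \<in> VD E w s t" "x \<noteq> t"
  shows "tdom E w s t (It E w s t x) x"
proof -
  let ?D = "{v. tdom E w s t v x}"
  have "t \<in> ?D" using assms unfolding tdom_def dpath_def by auto
  then have nonempty: "?D \<noteq> {}" by blast
  have finite: "finite ?D"
  proof (rule finite_subset)
    show "?D \<subseteq> Range (arcs\<^sup>+)" using tdom_trancl by blast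
    show "finite (Range (arcs\<^sup>+))" using finite_arcs by (simp add: finite_Range)
  qed
  define v where "v = arg_min_on ds ?D"
  have v: "v \<in> ?D"
    unfolding v_def by (rule arg_min_if_finite(1)[OF finite nonempty])
  have minimal: "\<And>u. u \<in> ?D \<Longrightarrow> ds v \<le> ds u"
    unfolding v_def by (rule arg_min_least[OF finite nonempty])
  let ?P = "\<lambda>v. tdom E w s t v x \<and> (\<forall>u. tdom E w s t u x \<and> u \<noteq> v \<longrightarrow> tdom E w s t u v)"
  have "?P v" using v minimal tdom_closest[of v x] by blast
  moreover have "v' = v" if "?P v'" for v'
  proof (rule ccontr)
    assume "v' \<noteq> v"
    then have "tdom E w s t v' v" "tdom E w s t v v'" using that \<open>?P v\<close> by blast+
    then have "(v, v) \<in> arcs\<^sup>+" using tdom_trancl by (meson trancl_trans)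
    then show False using acyclic_arcs by (simp add: acyclic_def)
  qed
  ultimately have "It E w s t x = v" unfolding It_def by (rule the_equality)
  then show ?thesis using v by simp
qed

lemma ds_mono: "(a, b) \<in> arcs\<^sup>* \<Longrightarrow> ds a \<le> ds b"
  using trancl_arc_dist by (auto simp: rtrancl_eq_or_trancl less_imp_le)

lemma It_beyond_incomparable:
  assumes lca: "lowest_common_ancestor arcs a b x"
    and incomparable: "a \<noteq> b" "(a, b) \<notin> arcs\<^sup>+" "(b, a) \<notin> arcs\<^sup>+"
  shows "(a, It E w s t x) \<in> arcs\<^sup>+"
proof -
  define z where "z = It E w s t x"
  have xa: "(x, a) \<in> arcs\<^sup>+" and xb: "(x, b) \<in> arcs\<^sup>+"
    using lca by (auto simp: lowest_common_ancestor_def)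
  have "tdom E w s t z x"
    unfolding z_def using trancl_arc_dist[OF xa] t_not_trancl xa by (intro It_tdom) auto
  then have xz: "(x, z) \<in> arcs\<^sup>+"
    and za: "(z, a) \<in> arcs\<^sup>* \<or> (a, z) \<in> arcs\<^sup>*" and zb: "(z, b) \<in> arcs\<^sup>* \<or> (b, z) \<in> arcs\<^sup>*"
    using tdom_trancl tdom_comparable_descendant xa xb by blast+
  have "z \<noteq> a" using zb incomparable by (auto simp: rtrancl_eq_or_trancl)
  moreover have "(z, a) \<notin> arcs\<^sup>+"
  proof
    assume "(z, a) \<in> arcs\<^sup>+"
    moreover have "(z, b) \<notin> arcs\<^sup>+" using lca xz \<open>(z, a) \<in> arcs\<^sup>+\<close>
      by (auto simp: lowest_common_ancestor_def)
    ultimately show False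
      using zb incomparable by (auto simp: rtrancl_eq_or_trancl dest: trancl_trans)
  qed
  ultimately show ?thesis using za unfolding z_def by (auto simp: rtrancl_eq_or_trancl)
qed

lemma gstar_le_dist:
  assumes "y \<in> Cset E w s t x" "(x, It E w s t y) \<in> arcs\<^sup>+"
  shows "gstar E w s t x \<le> ereal (dist_G E w y x)"
proof -
  have "y \<in> VD E w s t" using assms(1) trancl_arc_dist by (auto simp: Cset_def anc_def)
  moreover have "gfun E w s t x y = ereal (dist_G E w y x)"
    using assms by (simp add: gfun_def anc_def)
  ultimately show ?thesis unfolding gstar_def by (metis INF_lower)
qed

lemma ds_diff_le_gfun:
  assumes "(u, y) \<in> arcs\<^sup>+" "(y, x) \<in> arcs\<^sup>+"
  shows "ereal (ds x - ds y) \<le> gfun E w s t x u"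
proof -
  have "u \<in> V" "x \<in> V" using assms trancl_arc_dist VD_subset by blast+
  then have "ds x \<le> ds u + dist_G E w u x" using dist_G_triangle s_in_V by blast
  moreover have "ds u < ds y" using trancl_arc_dist assms(1) by blast
  ultimately show ?thesis by (simp add: gfun_def)
qed

end

theorem corollary2:
  fixes V :: "'a set" and E :: "('a \<times> 'a) set" and w :: "'a \<Rightarrow> 'a \<Rightarrow> real"
    and s t vj vi y :: 'a
  assumes "wgraph V E w" and "s \<in> V" and "t \<in> V"
    and "vj \<in> VD E w s t - {s}" and "vi \<in> VD E w s t - {s}" and "vj \<noteq> vi"
    and "dist_G E w s vj \<le> dist_G E w s vi"
    and "y \<in> Cset E w s t vj \<inter> Cset E w s t vi"
    and "\<not> anc E w s t vj vi"
  shows "gstar E w s t vj \<noteq> \<infinity> \<and>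
    (INF u \<in> {u. anc E w s t u y}. gfun E w s t vi u) \<ge> gstar E w s t vj"
proof -
  interpret wgraph_st V E w s t using assms(1-3) by unfold_locales
  have Is_y: "(Is E w s t vj, y) \<in> arcs\<^sup>+" and y_vj: "(y, vj) \<in> arcs\<^sup>+" and y_vi: "(y, vi) \<in> arcs\<^sup>+"
    using assms(8) by (auto simp: Cset_def anc_def)
  have incomparable: "(vj, vi) \<notin> arcs\<^sup>+" "(vi, vj) \<notin> arcs\<^sup>+"
    using assms(7,9) trancl_arc_dist by (force simp: anc_def)+
  obtain x where y_x: "(y, x) \<in> arcs\<^sup>*" and lca: "lowest_common_ancestor arcs vj vi x"
    using exists_lowest_common_ancestor[OF finite_arcs acyclic_arcs y_vj y_vi] .
  have x_vj: "(x, vj) \<in> arcs\<^sup>+" using lca by (simp add: lowest_common_ancestor_def)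
  then have "x \<in> Cset E w s t vj"
    using Is_y y_x by (auto simp: Cset_def anc_def dest: trancl_rtrancl_trancl)
  then have "gstar E w s t vj \<le> ereal (dist_G E w x vj)"
    using It_beyond_incomparable[OF lca assms(6) incomparable] by (rule gstar_le_dist)
  also have "dist_G E w x vj \<le> ds vj - ds y"
    using trancl_arc_dist[OF x_vj] ds_mono[OF y_x] by linarith
  finally have bound: "gstar E w s t vj \<le> ereal (ds vj - ds y)" by simp
  have "ereal (ds vj - ds y) \<le> gfun E w s t vi u" if "anc E w s t u y" for u
  proof -
    have "ereal (ds vj - ds y) \<le> ereal (ds vi - ds y)" using assms(7) by simp
    also have "\<dots> \<le> gfun E w s t vi u" using ds_diff_le_gfun[OF _ y_vi] that by (simp add: anc_def)
    finally show ?thesis .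
  qed
  then show ?thesis using bound by (auto intro: INF_greatest order_trans)
qed

end
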